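(* Let $\{E_\chi\}_{\chi\in\hat G}\subset\mathcal{P}_n$ be a maximal and non-degenerate correctable set of unitary Pauli errors with $E_1=I$ and $E_\chi(\mathcal{H}_{\rm pn})\subset\mathcal{H}_{\rm pn}^\perp$ for $\chi\ne1$. Let $h:\hat G\times G\to G$ be such that for every $g\in G$, $h(\cdot,g):\hat G\to G$ is a bijection with $h(1,g)=g$. Then for every $g\in G$ the operator $\hat E_g:=\sqrt{2^{n-k}}\sum_{\chi\in\hat G}\hat P_{h(\chi,g)}\Pi_{\rm pn}E_\chi$ is unitary on $\mathcal{H}_{\rm kin}$ and satisfies $\hat E_g\Pi_{\rm pn}=\sqrt{2^{n-k}}\hat P_g\Pi_{\rm pn}$.
   Context: Let $n\ge1$, $0\le k<n$, $\mathcal{H}_{\rm kin}=(\mathbb{C}^2)^{\otimes n}$, $\mathcal{P}_n$ the $n$-qubit Pauli group, $G=\mathbb{Z}_2^{\times(n-k)}$, $U:G\to\mathcal{P}_n$, $g\mapsto U^g$, a faithful unitary representation with $-I\notin U(G)$; $\mathcal{H}_{\rm pn}=\{\psi:U^g\psi=\psi\ \forall g\}$, $\Pi_{\rm pn}=\frac1{|G|}\sum_gU^g$. $\hat G$ is the group of characters $\chi:G\to\{\pm1\}$ with trivial character $1$. $\hat U$ is a unitary representation of $\hat G$ on $\mathcal{H}_{\rm kin}$ dual to $U$ ($U^g\hat U^\chi=\chi(g)\hat U^\chi U^g$), and $\hat P_g=\frac1{2^{n-k}}\sum_\chi\chi(g)\hat U^\chi$. A set $\{E_i\}$ is correctable if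 $\Pi_{\rm pn}E_i^\dagger E_j\Pi_{\rm pn}=C_{ij}\Pi_{\rm pn}$ with $(C_{ij})$ Hermitian; maximal if $\mathrm{rank}(C)=2^{n-k}$; non-degenerate if $C$ is invertible. *)

theory Defs
  imports "HOL-Analysis.Analysis" "Jordan_Normal_Form.Schur_Decomposition" "Jordan_Normal_Form.DL_Rank"
begin

text \<open>Computational basis of (C^2)^{\<otimes>n} is indexed by x < 2^n (bit j of x = state of qubit j).
  The Pauli operator X^a Z^b (a, b < 2^n) maps |x> to (-1)^{|b \<and> x|} |x xor a>.\<close>

definition pauli_XZ :: "nat \<Rightarrow> nat \<Rightarrow> nat \<Rightarrow> complex mat" where
  "pauli_XZ n a b = mat (2^n) (2^n) (\<lambda>(y, x).
     if y = Bit_Operations.xor x a then (-1) ^ card {j. j < n \<and> bit b j \<and> bit x j} else 0)"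

definition pauli_group :: "nat \<Rightarrow> complex mat set" where
  "pauli_group n = {c \<cdot>\<^sub>m pauli_XZ n a b | c a b. c \<in> {1, -1, \<i>, -\<i>} \<and> a < 2^n \<and> b < 2^n}"

definition unitary_mat :: "nat \<Rightarrow> complex mat \<Rightarrow> bool" where
  "unitary_mat d A \<longleftrightarrow> A \<in> carrier_mat d d \<and> mat_adjoint A * A = 1\<^sub>m d \<and> A * mat_adjoint A = 1\<^sub>m d"

definition msum :: "nat \<Rightarrow> ('i \<Rightarrow> complex mat) \<Rightarrow> 'i set \<Rightarrow> complex mat" where
  "msum d f I = mat d d (\<lambda>(i, j). \<Sum>x\<in>I. f x $$ (i, j))"

text \<open>G = Z_2^m is modelled as {0..<2^m} with bitwise xor as group operation.\<close>
definition grp :: "nat \<Rightarrow> nat set" where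
  "grp m = {..<2^m}"

text \<open>Characters chi : G \<rightarrow> {+1,-1}, extended by 1 outside G (so the set is finite).\<close>
definition dual_grp :: "nat \<Rightarrow> (nat \<Rightarrow> complex) set" where
  "dual_grp m = {\<xi>. (\<forall>g\<in>grp m. \<xi> g = 1 \<or> \<xi> g = -1)
      \<and> (\<forall>g\<in>grp m. \<forall>h\<in>grp m. \<xi> (Bit_Operations.xor g h) = \<xi> g * \<xi> h)
      \<and> (\<forall>g. g \<notin> grp m \<longrightarrow> \<xi> g = 1)}"

definition triv_char :: "nat \<Rightarrow> complex" where
  "triv_char = (\<lambda>_. 1)"

definition char_mult :: "(nat \<Rightarrow> complex) \<Rightarrow> (nat \<Rightarrow> complex) \<Rightarrow> (nat \<Rightarrow> complex)" where
  "char_mult \<xi> \<xi>' = (\<lambda>g. \<xi> g * \<xi>' g)"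

definition pauli_stab_rep :: "nat \<Rightarrow> nat \<Rightarrow> (nat \<Rightarrow> complex mat) \<Rightarrow> bool" where
  "pauli_stab_rep n m U \<longleftrightarrow>
     (\<forall>g\<in>grp m. U g \<in> pauli_group n \<and> unitary_mat (2^n) (U g))
     \<and> (\<forall>g\<in>grp m. \<forall>h\<in>grp m. U (Bit_Operations.xor g h) = U g * U h)
     \<and> inj_on U (grp m)
     \<and> - (1\<^sub>m (2^n)) \<notin> U ` grp m"

definition dual_rep :: "nat \<Rightarrow> nat \<Rightarrow> (nat \<Rightarrow> complex mat) \<Rightarrow> ((nat \<Rightarrow> complex) \<Rightarrow> complex mat) \<Rightarrow> bool" where
  "dual_rep n m U Uh \<longleftrightarrow>
     (\<forall>\<xi>\<in>dual_grp m. unitary_mat (2^n) (Uh \<xi>))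
     \<and> (\<forall>\<xi>\<in>dual_grp m. \<forall>\<xi>'\<in>dual_grp m. Uh (char_mult \<xi> \<xi>') = Uh \<xi> * Uh \<xi>')
     \<and> (\<forall>g\<in>grp m. \<forall>\<xi>\<in>dual_grp m. U g * Uh \<xi> = \<xi> g \<cdot>\<^sub>m (Uh \<xi> * U g))"

definition proj_pn :: "nat \<Rightarrow> nat \<Rightarrow> (nat \<Rightarrow> complex mat) \<Rightarrow> complex mat" where
  "proj_pn n m U = (1 / of_nat (card (grp m))) \<cdot>\<^sub>m msum (2^n) U (grp m)"

definition H_pn :: "nat \<Rightarrow> nat \<Rightarrow> (nat \<Rightarrow> complex mat) \<Rightarrow> complex vec set" where
  "H_pn n m U = {\<psi> \<in> carrier_vec (2^n). \<forall>g\<in>grp m. U g *\<^sub>v \<psi> = \<psi>}"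

definition hatP :: "nat \<Rightarrow> nat \<Rightarrow> ((nat \<Rightarrow> complex) \<Rightarrow> complex mat) \<Rightarrow> nat \<Rightarrow> complex mat" where
  "hatP n m Uh g = (1 / 2^m) \<cdot>\<^sub>m msum (2^n) (\<lambda>\<xi>. \<xi> g \<cdot>\<^sub>m Uh \<xi>) (dual_grp m)"

definition correctable_with :: "complex mat \<Rightarrow> ('i \<Rightarrow> complex mat) \<Rightarrow> 'i set
    \<Rightarrow> (nat \<Rightarrow> 'i) \<Rightarrow> complex mat \<Rightarrow> bool" where
  "correctable_with Proj E I e C \<longleftrightarrow>
     bij_betw e {..<card I} I \<and> C \<in> carrier_mat (card I) (card I)
     \<and> (\<forall>i<card I. \<forall>j<card I. Proj * mat_adjoint (E (e i)) * E (e j) * Proj = C $$ (i, j) \<cdot>\<^sub>m Proj)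
     \<and> mat_adjoint C = C"

end

theory Submission
  imports Defs
begin

text \<open>
  Let \<open>P\<close> be the projector onto the code space and \<open>Ph a\<close> (\<open>a \<in> G\<close>) the projectors of the dual
  representation \<open>Uh\<close>. Orthogonality of characters makes the \<open>Ph a\<close> mutually orthogonal projectors
  summing to the identity, and \<open>U g * Uh \<chi> = \<chi> g \<cdot> Uh \<chi> * U g\<close> gives
  \<open>U g * Ph a = Ph (a xor g) * U g\<close>; averaging over \<open>G\<close> yields \<open>Ph a * P * Ph a = 2^-m \<cdot> Ph a\<close>,
  where \<open>m = n - k\<close>.

  Non-degeneracy forces \<open>P * E\<chi>\<^sup>\<dagger> * E\<chi>' * P = 0\<close> for \<open>\<chi> \<noteq> \<chi>'\<close>: the Pauli operator \<open>E\<chi>\<^sup>\<dagger> * E\<chi>'\<close>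
  either anticommutes with some \<open>U g\<close>, and then its compression to the code space vanishes, or
  commutes with all of them, and then \<open>E\<chi>' * P\<close> is a multiple of \<open>E\<chi> * P\<close>, so that \<open>C\<close> has two
  proportional columns.

  Hence the summands \<open>T\<chi> = Ph (h \<chi> g) * P * E\<chi>\<close> of the recovery operator satisfy
  \<open>T\<chi> * T\<chi>'\<^sup>\<dagger> = 0\<close> for \<open>\<chi> \<noteq> \<chi>'\<close> and \<open>T\<chi> * T\<chi>\<^sup>\<dagger> = 2^-m \<cdot> Ph (h \<chi> g)\<close>. As \<open>h(\<cdot>, g)\<close> is a
  bijection onto \<open>G\<close>, the operator is a co-isometry, \<open>\<Sum>a. Ph a = 1\<close>, hence unitary; and
  multiplied by \<open>P\<close> only its summand \<open>\<chi> = 1\<close> survives, since \<open>P * E\<chi> * P = 0\<close> for \<open>\<chi> \<noteq> 1\<close>.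
\<close>

lemma index_mult_mat_sum:
  assumes "A \<in> carrier_mat nr n" "B \<in> carrier_mat n nc" "i < nr" "j < nc"
  shows "(A * B) $$ (i, j) = (\<Sum>l<n. A $$ (i, l) * B $$ (l, j))"
  using assms by (auto simp: scalar_prod_def lessThan_atLeast0 intro!: sum.cong)

lemma smult_smult_mat: "a \<cdot>\<^sub>m (b \<cdot>\<^sub>m A) = (a * b :: 'a :: semigroup_mult) \<cdot>\<^sub>m A"
  by (rule eq_matI) (auto simp: mult.assoc)

lemma one_smult_mat [simp]: "(1 :: 'a :: monoid_mult) \<cdot>\<^sub>m A = A"
  by (rule eq_matI) auto

lemma zero_smult_mat: "A \<in> carrier_mat nr nc \<Longrightarrow> (0 :: 'a :: mult_zero) \<cdot>\<^sub>m A = 0\<^sub>m nr nc"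
  by (rule eq_matI) auto

lemma smult_mult_smult_mat:
  assumes "A \<in> carrier_mat nr n" "B \<in> carrier_mat n nc"
  shows "(a \<cdot>\<^sub>m A) * (b \<cdot>\<^sub>m B) = (a * b :: 'a :: comm_semiring_0) \<cdot>\<^sub>m (A * B)"
proof -
  have "(a \<cdot>\<^sub>m A) * (b \<cdot>\<^sub>m B) = a \<cdot>\<^sub>m (A * (b \<cdot>\<^sub>m B))"
    using assms by (intro mult_smult_assoc_mat) auto
  also have "A * (b \<cdot>\<^sub>m B) = b \<cdot>\<^sub>m (A * B)"
    using assms by (intro mult_smult_distrib) auto
  finally show ?thesis by (simp add: smult_smult_mat)
qed

lemma mat_adjoint_carrier [simp]: "A \<in> carrier_mat nr nc \<Longrightarrow> mat_adjoint A \<in> carrier_mat nc nr"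
  unfolding mat_adjoint_def by auto

lemma mat_adjoint_dim [simp]:
  "dim_row (mat_adjoint A) = dim_col A" "dim_col (mat_adjoint A) = dim_row A"
  unfolding mat_adjoint_def by auto

lemma mat_adjoint_index [simp]:
  "i < dim_col A \<Longrightarrow> j < dim_row A \<Longrightarrow> mat_adjoint A $$ (i, j) = cnj (A $$ (j, i))"
  unfolding mat_adjoint_def by (simp add: mat_of_rows_index conjugate_vec_def)

lemma mat_adjoint_mult:
  assumes A: "(A :: complex mat) \<in> carrier_mat nr n" and B: "B \<in> carrier_mat n nc"
  shows "mat_adjoint (A * B) = mat_adjoint B * mat_adjoint A"
proof (rule eq_matI)
  fix i j assume "i < dim_row (mat_adjoint B * mat_adjoint A)" "j < dim_col (mat_adjoint B * mat_adjoint A)"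
  then have ij: "i < nc" "j < nr" using assms by auto
  have "mat_adjoint (A * B) $$ (i, j) = cnj ((A * B) $$ (j, i))" using A B ij by simp
  also have "\<dots> = (\<Sum>l<n. cnj (A $$ (j, l)) * cnj (B $$ (l, i)))"
    unfolding index_mult_mat_sum[OF A B ij(2) ij(1)] by simp
  also have "\<dots> = (mat_adjoint B * mat_adjoint A) $$ (i, j)"
    unfolding index_mult_mat_sum[OF mat_adjoint_carrier[OF B] mat_adjoint_carrier[OF A] ij]
    using A B ij by (auto simp: mult.commute intro!: sum.cong)
  finally show "mat_adjoint (A * B) $$ (i, j) = (mat_adjoint B * mat_adjoint A) $$ (i, j)" .
qed (use assms in auto)

lemma mat_adjoint_smult: "mat_adjoint (c \<cdot>\<^sub>m A) = cnj c \<cdot>\<^sub>m mat_adjoint A"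
  by (rule eq_matI) auto

lemma mat_adjoint_one [simp]: "mat_adjoint (1\<^sub>m d :: complex mat) = 1\<^sub>m d"
  by (rule eq_matI) auto

lemma mat_eq_zero_if_eq_neg: "(A :: 'a :: field_char_0 mat) = (-1) \<cdot>\<^sub>m A \<Longrightarrow> A = 0\<^sub>m (dim_row A) (dim_col A)"
proof (rule eq_matI)
  fix i j assume A: "A = (-1) \<cdot>\<^sub>m A" and ij: "i < dim_row (0\<^sub>m (dim_row A) (dim_col A))"
    "j < dim_col (0\<^sub>m (dim_row A) (dim_col A))"
  have "A $$ (i, j) = - A $$ (i, j)" using ij by (subst A) auto
  then have "2 * A $$ (i, j) = 0" by simp
  then show "A $$ (i, j) = 0\<^sub>m (dim_row A) (dim_col A) $$ (i, j)" using ij by simp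
qed auto

lemma mat_eq_one_if_unitary_idem:
  assumes "A \<in> carrier_mat d d" "mat_adjoint A * A = 1\<^sub>m d" "A * A = (A :: complex mat)"
  shows "A = 1\<^sub>m d"
proof -
  have "A = 1\<^sub>m d * A" using assms by simp
  also have "\<dots> = (mat_adjoint A * A) * A" using assms by simp
  also have "\<dots> = mat_adjoint A * (A * A)" using assms by (intro assoc_mult_mat) auto
  finally show ?thesis using assms by simp
qed

lemma mat_adjoint_eq_if_unitary_involution:
  assumes "A \<in> carrier_mat d d" "mat_adjoint A * A = 1\<^sub>m d" "A * A = (1\<^sub>m d :: complex mat)"
  shows "mat_adjoint A = A"
proof -
  have "mat_adjoint A = mat_adjoint A * (A * A)" using assms by simp
  also have "\<dots> = (mat_adjoint A * A) * A" using assms by (intro assoc_mult_mat[symmetric]) auto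
  finally show ?thesis using assms by simp
qed

lemma invertible_mat_kernel:
  fixes C :: "'a :: field mat"
  assumes C: "C \<in> carrier_mat N N" and inv: "invertible_mat C"
    and v: "v \<in> carrier_vec N" and Cv: "C *\<^sub>v v = 0\<^sub>v N"
  shows "v = 0\<^sub>v N"
proof -
  obtain B where CB: "C * B = 1\<^sub>m N" and BC: "B * C = 1\<^sub>m (dim_row B)"
    using inv C unfolding invertible_mat_def inverts_mat_def by auto
  have B: "B \<in> carrier_mat N N"
  proof (rule carrier_matI)
    show "dim_col B = N" using arg_cong[OF CB, of dim_col] by simp
    show "dim_row B = N" using arg_cong[OF BC, of dim_col] C by simp
  qed
  have "v = (B * C) *\<^sub>v v" using BC B v by simp
  also have "\<dots> = B *\<^sub>v 0\<^sub>v N" using B C v Cv by simp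
  also have "\<dots> = 0\<^sub>v N" using B by (intro eq_vecI) auto
  finally show ?thesis .
qed

lemma invertible_mat_col_not_multiple:
  fixes C :: "'a :: field mat"
  assumes C: "C \<in> carrier_mat N N" and inv: "invertible_mat C"
    and pq: "p < N" "q < N" "p \<noteq> q"
  shows "\<not> (\<forall>l<N. C $$ (l, q) = c * C $$ (l, p))"
proof
  assume col: "\<forall>l<N. C $$ (l, q) = c * C $$ (l, p)"
  define v where "v = vec N (\<lambda>t. if t = q then 1 else if t = p then - c else 0)"
  have v: "v \<in> carrier_vec N" unfolding v_def by simp
  have "C *\<^sub>v v = 0\<^sub>v N"
  proof (rule eq_vecI)
    fix l assume "l < dim_vec (0\<^sub>v N :: 'a vec)"
    then have l: "l < N" by simp
    have "(C *\<^sub>v v) $ l = (\<Sum>t<N. C $$ (l, t) * v $ t)"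
      using C l v by (simp add: scalar_prod_def lessThan_atLeast0)
    also have "\<dots> = (\<Sum>t<N. (if t = q then C $$ (l, q) else 0) + (if t = p then - c * C $$ (l, p) else 0))"
      unfolding v_def using pq by (intro sum.cong) auto
    also have "\<dots> = 0" using pq col l by (simp add: sum.distrib)
    finally show "(C *\<^sub>v v) $ l = 0\<^sub>v N $ l" using l by simp
  qed (use C in simp)
  then have "v = 0\<^sub>v N" using invertible_mat_kernel[OF C inv v] by simp
  then have "v $ q = 0" using pq by simp
  then show False unfolding v_def using pq by simp
qed

lemma msum_carrier [simp]: "msum d f I \<in> carrier_mat d d"
  unfolding msum_def by auto

lemma msum_dim [simp]: "dim_row (msum d f I) = d" "dim_col (msum d f I) = d"
  unfolding msum_def by auto

lemma msum_index [simp]: "i < d \<Longrightarrow> j < d \<Longrightarrow> msum d f I $$ (i, j) = (\<Sum>x\<in>I. f x $$ (i, j))"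
  unfolding msum_def by auto

lemma msum_cong: "(\<And>x. x \<in> I \<Longrightarrow> f x = g x) \<Longrightarrow> msum d f I = msum d g I"
  unfolding msum_def by (auto intro!: sum.cong)

lemma msum_reindex: "bij_betw \<phi> J I \<Longrightarrow> msum d f I = msum d (\<lambda>y. f (\<phi> y)) J"
  unfolding msum_def by (auto simp: sum.reindex_bij_betw[symmetric])

lemma msum_swap: "msum d (\<lambda>x. msum d (f x) J) I = msum d (\<lambda>y. msum d (\<lambda>x. f x y) I) J"
  by (rule eq_matI) (auto intro: sum.swap)

lemma msum_const: "A \<in> carrier_mat d d \<Longrightarrow> msum d (\<lambda>x. A) I = of_nat (card I) \<cdot>\<^sub>m A"
  by (rule eq_matI) auto

lemma msum_smult_const:
  "A \<in> carrier_mat d d \<Longrightarrow> msum d (\<lambda>x. c x \<cdot>\<^sub>m A) I = (\<Sum>x\<in>I. c x) \<cdot>\<^sub>m A"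
  by (rule eq_matI) (auto simp: sum_distrib_right)

lemma smult_msum:
  assumes "\<And>x. x \<in> I \<Longrightarrow> f x \<in> carrier_mat d d"
  shows "c \<cdot>\<^sub>m msum d f I = msum d (\<lambda>x. c \<cdot>\<^sub>m f x) I"
proof -
  have "\<And>x. x \<in> I \<Longrightarrow> dim_row (f x) = d \<and> dim_col (f x) = d" using assms by auto
  then show ?thesis by (intro eq_matI) (auto simp: sum_distrib_left intro!: sum.cong)
qed

lemma msum_single:
  assumes "a \<in> I" "finite I" "\<And>x. x \<in> I \<Longrightarrow> x \<noteq> a \<Longrightarrow> f x = 0\<^sub>m d d" "f a \<in> carrier_mat d d"
  shows "msum d f I = f a"
proof (rule eq_matI)
  fix i j assume "i < dim_row (f a)" "j < dim_col (f a)"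
  then have ij: "i < d" "j < d" using assms by auto
  have "(\<Sum>x\<in>I. f x $$ (i, j)) = (\<Sum>x\<in>I. if x = a then f a $$ (i, j) else 0)"
    using assms ij by (intro sum.cong) auto
  then show "msum d f I $$ (i, j) = f a $$ (i, j)" using assms ij by simp
qed (use assms in auto)

lemma mult_msum:
  assumes A: "A \<in> carrier_mat d d" and f: "\<And>x. x \<in> I \<Longrightarrow> f x \<in> carrier_mat d d"
  shows "A * msum d f I = msum d (\<lambda>x. A * f x) I"
proof (rule eq_matI)
  fix i j assume "i < dim_row (msum d (\<lambda>x. A * f x) I)" "j < dim_col (msum d (\<lambda>x. A * f x) I)"
  then have ij: "i < d" "j < d" by auto
  have "(A * msum d f I) $$ (i, j) = (\<Sum>x\<in>I. \<Sum>l<d. A $$ (i, l) * f x $$ (l, j))"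
    unfolding index_mult_mat_sum[OF A msum_carrier ij]
    using ij by (simp add: sum_distrib_left sum.swap[of _ I])
  also have "\<dots> = (\<Sum>x\<in>I. (A * f x) $$ (i, j))"
    using A f ij by (intro sum.cong) (auto simp: index_mult_mat_sum[of _ d d _ d])
  finally show "(A * msum d f I) $$ (i, j) = msum d (\<lambda>x. A * f x) I $$ (i, j)" using ij by simp
qed (use A in auto)

lemma msum_mult:
  assumes A: "A \<in> carrier_mat d d" and f: "\<And>x. x \<in> I \<Longrightarrow> f x \<in> carrier_mat d d"
  shows "msum d f I * A = msum d (\<lambda>x. f x * A) I"
proof (rule eq_matI)
  fix i j assume "i < dim_row (msum d (\<lambda>x. f x * A) I)" "j < dim_col (msum d (\<lambda>x. f x * A) I)"
  then have ij: "i < d" "j < d" by auto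
  have "(msum d f I * A) $$ (i, j) = (\<Sum>x\<in>I. \<Sum>l<d. f x $$ (i, l) * A $$ (l, j))"
    unfolding index_mult_mat_sum[OF msum_carrier A ij]
    using ij by (simp add: sum_distrib_right sum.swap[of _ I])
  also have "\<dots> = (\<Sum>x\<in>I. (f x * A) $$ (i, j))"
    using A f ij by (intro sum.cong) (auto simp: index_mult_mat_sum[of _ d d A d])
  finally show "(msum d f I * A) $$ (i, j) = msum d (\<lambda>x. f x * A) I $$ (i, j)" using ij by simp
qed (use A in auto)

lemma mat_adjoint_msum:
  assumes "\<And>x. x \<in> I \<Longrightarrow> f x \<in> carrier_mat d d"
  shows "mat_adjoint (msum d f I) = msum d (\<lambda>x. mat_adjoint (f x)) I"
proof -
  have "\<And>x. x \<in> I \<Longrightarrow> dim_row (f x) = d \<and> dim_col (f x) = d" using assms by auto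
  then show ?thesis by (intro eq_matI) (auto intro!: sum.cong)
qed

section \<open>Pauli operators\<close>

lemma xor_less_exp: "(a::nat) < 2^n \<Longrightarrow> b < 2^n \<Longrightarrow> xor a b < 2^n"
  by (metis take_bit_nat_eq_self_iff take_bit_xor)

lemma bit_imp_less_exp: "(x::nat) < 2^n \<Longrightarrow> bit x j \<Longrightarrow> j < n"
  by (metis bit_take_bit_iff take_bit_nat_eq_self_iff)

lemma xor_cancel [simp]: "xor (xor a b) b = (a::nat)" "xor a (xor a b) = (b::nat)"
  by (simp add: xor.assoc) (simp flip: xor.assoc)

lemma xor_eq_self_iff: "xor x a = x \<longleftrightarrow> (a::nat) = 0"
proof
  assume "xor x a = x"
  then have "xor x (xor x a) = xor x x" by (rule arg_cong)
  then show "a = 0" by simp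
qed simp

lemma xor_eq_zero_iff: "xor a b = 0 \<longleftrightarrow> (a::nat) = b"
proof
  assume "xor a b = 0"
  then have "xor (xor a b) b = xor 0 b" by (rule arg_cong)
  then show "a = b" by simp
qed simp

lemma nonzero_imp_ex_bit: "(x::nat) \<noteq> 0 \<Longrightarrow> \<exists>j. bit x j"
proof (rule ccontr)
  assume "x \<noteq> 0" "\<nexists>j. bit x j"
  then show False using bit_eqI[of x 0] by simp
qed

definition dot_sign :: "nat \<Rightarrow> nat \<Rightarrow> nat \<Rightarrow> complex" where
  "dot_sign n b x = (-1) ^ card {j. j < n \<and> bit b j \<and> bit x j}"

lemma dot_sign_xor: "dot_sign n b (xor x y) = dot_sign n b x * dot_sign n b y"
proof -
  define A where "A = {j. j < n \<and> bit b j \<and> bit x j}"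
  define B where "B = {j. j < n \<and> bit b j \<and> bit y j}"
  define S where "S = {j. j < n \<and> bit b j \<and> bit (xor x y) j}"
  have fin: "finite A" "finite B" unfolding A_def B_def by auto
  have "S = (A - B) \<union> (B - A)"
    unfolding S_def A_def B_def by (auto simp: bit_xor_iff)
  then have "card S = card (A - B) + card (B - A)"
    using fin card_Un_disjoint[of "A - B" "B - A"] by auto
  moreover have "card A = card (A \<inter> B) + card (A - B)"
    using fin(1) by (rule card_Int_Diff)
  moreover have "card B = card (B \<inter> A) + card (B - A)"
    using fin(2) by (rule card_Int_Diff)
  ultimately have card_S: "card S + 2 * card (A \<inter> B) = card A + card B"
    by (simp add: Int_commute)
  have "(-1 :: complex) ^ card S = (-1) ^ (card S + 2 * card (A \<inter> B))"
    by (simp add: power_add power_mult)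
  also have "\<dots> = (-1) ^ card A * (-1) ^ card B"
    by (simp only: card_S power_add)
  finally show ?thesis unfolding dot_sign_def A_def B_def S_def .
qed

lemma dot_sign_commute: "dot_sign n b x = dot_sign n x b"
  unfolding dot_sign_def by (simp add: conj_commute)

lemma dot_sign_xor_left: "dot_sign n (xor b c) x = dot_sign n b x * dot_sign n c x"
  using dot_sign_xor[of n x b c] by (simp only: dot_sign_commute[of n x])

lemma dot_sign_cases: "dot_sign n b x = 1 \<or> dot_sign n b x = -1"
  unfolding dot_sign_def by (metis neg_one_even_power neg_one_odd_power)

lemma dot_sign_square [simp]: "dot_sign n b x * dot_sign n b x = 1"
  using dot_sign_cases[of n b x] by auto

lemma cnj_dot_sign [simp]: "cnj (dot_sign n b x) = dot_sign n b x"
  using dot_sign_cases[of n b x] by auto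

lemma dot_sign_zero [simp]: "dot_sign n 0 x = 1" "dot_sign n b 0 = 1"
  unfolding dot_sign_def by auto

lemma sum_dot_sign:
  assumes "b \<noteq> 0" "b < 2^n"
  shows "(\<Sum>x<2^n. dot_sign n b x) = 0"
proof -
  obtain j where j: "bit b j" using nonzero_imp_ex_bit assms(1) by blast
  then have "j < n" using bit_imp_less_exp assms(2) by blast
  define t :: nat where "t = 2^j"
  have "t < 2^n" unfolding t_def using \<open>j < n\<close> by simp
  then have bij: "bij_betw (\<lambda>x. xor x t) {..<2^n} {..<2^n}"
    by (intro bij_betw_byWitness[where f'="\<lambda>x. xor x t"]) (auto simp: xor_less_exp)
  have "{i. i < n \<and> bit b i \<and> bit t i} = {j}"
    unfolding t_def using j \<open>j < n\<close> by (auto simp: bit_exp_iff)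
  then have sign_t: "dot_sign n b t = -1" unfolding dot_sign_def by simp
  have "(\<Sum>x<2^n. dot_sign n b x) = (\<Sum>x<2^n. dot_sign n b (xor x t))"
    using sum.reindex_bij_betw[OF bij, of "dot_sign n b"] by simp
  also have "\<dots> = - (\<Sum>x<2^n. dot_sign n b x)" by (simp add: dot_sign_xor sign_t sum_negf)
  finally show ?thesis by simp
qed

lemma pauli_XZ_carrier [simp]: "pauli_XZ n a b \<in> carrier_mat (2^n) (2^n)"
  unfolding pauli_XZ_def by auto

lemma pauli_XZ_dim [simp]: "dim_row (pauli_XZ n a b) = 2^n" "dim_col (pauli_XZ n a b) = 2^n"
  unfolding pauli_XZ_def by auto

lemma pauli_XZ_index:
  "y < 2^n \<Longrightarrow> x < 2^n \<Longrightarrow> pauli_XZ n a b $$ (y, x) = (if y = xor x a then dot_sign n b x else 0)"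
  unfolding pauli_XZ_def dot_sign_def by auto

lemma pauli_XZ_zero: "pauli_XZ n 0 0 = 1\<^sub>m (2^n)"
  by (rule eq_matI) (auto simp: pauli_XZ_index)

lemma pauli_XZ_mult:
  assumes "a < 2^n" "a' < 2^n"
  shows "pauli_XZ n a b * pauli_XZ n a' b' = dot_sign n b a' \<cdot>\<^sub>m pauli_XZ n (xor a a') (xor b b')"
proof (rule eq_matI)
  fix y x assume "y < dim_row (dot_sign n b a' \<cdot>\<^sub>m pauli_XZ n (xor a a') (xor b b'))"
    "x < dim_col (dot_sign n b a' \<cdot>\<^sub>m pauli_XZ n (xor a a') (xor b b'))"
  then have yx: "y < 2^n" "x < 2^n" by auto
  have xa: "xor x a' < 2^n" using xor_less_exp yx assms by auto
  have "(pauli_XZ n a b * pauli_XZ n a' b') $$ (y, x)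
      = (\<Sum>z<2^n. if z = xor x a' then (if y = xor z a then dot_sign n b z else 0) * dot_sign n b' x else 0)"
    unfolding index_mult_mat_sum[OF pauli_XZ_carrier pauli_XZ_carrier yx]
    using yx by (intro sum.cong) (auto simp: pauli_XZ_index)
  also have "\<dots> = (dot_sign n b a' \<cdot>\<^sub>m pauli_XZ n (xor a a') (xor b b')) $$ (y, x)"
    using xa yx by (auto simp: pauli_XZ_index dot_sign_xor dot_sign_xor_left xor.assoc xor.commute xor.left_commute)
  finally show "(pauli_XZ n a b * pauli_XZ n a' b') $$ (y, x) = \<dots>" .
qed auto

lemma mat_adjoint_pauli_XZ:
  "a < 2^n \<Longrightarrow> mat_adjoint (pauli_XZ n a b) = dot_sign n b a \<cdot>\<^sub>m pauli_XZ n a b"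
  by (rule eq_matI) (auto simp: pauli_XZ_index dot_sign_xor mult.commute)

lemma pauli_groupE:
  assumes "A \<in> pauli_group n"
  obtains c a b where "c \<in> {1, -1, \<i>, -\<i>}" "a < 2^n" "b < 2^n" "A = c \<cdot>\<^sub>m pauli_XZ n a b"
  using assms unfolding pauli_group_def by auto

lemma pauli_group_carrier: "A \<in> pauli_group n \<Longrightarrow> A \<in> carrier_mat (2^n) (2^n)"
  by (erule pauli_groupE) auto

lemma pauli_group_mult:
  assumes "A \<in> pauli_group n" "B \<in> pauli_group n"
  shows "A * B \<in> pauli_group n"
proof -
  obtain c a b where c: "c \<in> {1, -1, \<i>, -\<i>}" and ab: "a < 2^n" "b < 2^n"
    and A: "A = c \<cdot>\<^sub>m pauli_XZ n a b"
    using assms(1) by (rule pauli_groupE)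
  obtain c' a' b' where c': "c' \<in> {1, -1, \<i>, -\<i>}" and ab': "a' < 2^n" "b' < 2^n"
    and B: "B = c' \<cdot>\<^sub>m pauli_XZ n a' b'"
    using assms(2) by (rule pauli_groupE)
  have "A * B = (c * c' * dot_sign n b a') \<cdot>\<^sub>m pauli_XZ n (xor a a') (xor b b')"
    unfolding A B smult_mult_smult_mat[OF pauli_XZ_carrier pauli_XZ_carrier]
      pauli_XZ_mult[OF ab(1) ab'(1)] smult_smult_mat ..
  moreover have "c * c' * dot_sign n b a' \<in> {1, -1, \<i>, -\<i>}"
    using c c' dot_sign_cases[of n b a'] by auto
  moreover have "xor a a' < 2^n" "xor b b' < 2^n" using ab ab' xor_less_exp by auto
  ultimately show ?thesis unfolding pauli_group_def by blast
qed

lemma pauli_group_adjoint: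
  assumes "A \<in> pauli_group n"
  shows "mat_adjoint A \<in> pauli_group n" "mat_adjoint A * A = 1\<^sub>m (2^n)" "A * mat_adjoint A = 1\<^sub>m (2^n)"
proof -
  obtain c a b where c: "c \<in> {1, -1, \<i>, -\<i>}" and ab: "a < 2^n" "b < 2^n"
    and A: "A = c \<cdot>\<^sub>m pauli_XZ n a b"
    using assms by (rule pauli_groupE)
  have adj: "mat_adjoint A = (cnj c * dot_sign n b a) \<cdot>\<^sub>m pauli_XZ n a b"
    unfolding A mat_adjoint_smult mat_adjoint_pauli_XZ[OF ab(1)] smult_smult_mat ..
  have "cnj c * dot_sign n b a \<in> {1, -1, \<i>, -\<i>}" using c dot_sign_cases[of n b a] by auto
  then show "mat_adjoint A \<in> pauli_group n" unfolding adj pauli_group_def using ab by blast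
  have square: "pauli_XZ n a b * pauli_XZ n a b = dot_sign n b a \<cdot>\<^sub>m 1\<^sub>m (2^n)"
    using ab by (simp add: pauli_XZ_mult pauli_XZ_zero)
  have "cnj c * c = 1" using c by auto
  then show "mat_adjoint A * A = 1\<^sub>m (2^n)" "A * mat_adjoint A = 1\<^sub>m (2^n)"
    unfolding adj unfolding A smult_mult_smult_mat[OF pauli_XZ_carrier pauli_XZ_carrier] square smult_smult_mat
    by (simp_all add: algebra_simps)
qed

lemma pauli_group_commute_or_anticommute:
  assumes "A \<in> pauli_group n" "B \<in> pauli_group n"
  obtains \<sigma> where "\<sigma> = 1 \<or> \<sigma> = -1" "A * B = \<sigma> \<cdot>\<^sub>m (B * A)"
proof -
  obtain c a b where c: "c \<in> {1, -1, \<i>, -\<i>}" and ab: "a < 2^n" "b < 2^n"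
    and A: "A = c \<cdot>\<^sub>m pauli_XZ n a b"
    using assms(1) by (rule pauli_groupE)
  obtain c' a' b' where c': "c' \<in> {1, -1, \<i>, -\<i>}" and ab': "a' < 2^n" "b' < 2^n"
    and B: "B = c' \<cdot>\<^sub>m pauli_XZ n a' b'"
    using assms(2) by (rule pauli_groupE)
  define \<sigma> where "\<sigma> = dot_sign n b a' * dot_sign n b' a"
  have phase: "c * c' * dot_sign n b a' = \<sigma> * (c' * c * dot_sign n b' a)"
    unfolding \<sigma>_def using dot_sign_cases[of n b' a] by (auto simp: ac_simps)
  have "A * B = (c * c' * dot_sign n b a') \<cdot>\<^sub>m pauli_XZ n (xor a a') (xor b b')"
    unfolding A B smult_mult_smult_mat[OF pauli_XZ_carrier pauli_XZ_carrier]
      pauli_XZ_mult[OF ab(1) ab'(1)] smult_smult_mat ..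
  also have "\<dots> = (\<sigma> * (c' * c * dot_sign n b' a)) \<cdot>\<^sub>m pauli_XZ n (xor a' a) (xor b' b)"
    by (simp only: phase xor.commute)
  also have "\<dots> = \<sigma> \<cdot>\<^sub>m (B * A)"
    unfolding A B smult_mult_smult_mat[OF pauli_XZ_carrier pauli_XZ_carrier]
      pauli_XZ_mult[OF ab'(1) ab(1)] smult_smult_mat ..
  finally have "A * B = \<sigma> \<cdot>\<^sub>m (B * A)" .
  moreover have "\<sigma> = 1 \<or> \<sigma> = -1"
    unfolding \<sigma>_def using dot_sign_cases[of n b a'] dot_sign_cases[of n b' a] by auto
  ultimately show thesis using that by blast
qed

lemma pauli_group_scalar_or_traceless:
  assumes "A \<in> pauli_group n"
  shows "(\<exists>c. A = c \<cdot>\<^sub>m 1\<^sub>m (2^n)) \<or> (\<Sum>i<2^n. A $$ (i, i)) = 0"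
proof -
  obtain c a b where ab: "a < 2^n" "b < 2^n" and A: "A = c \<cdot>\<^sub>m pauli_XZ n a b"
    using assms by (rule pauli_groupE)
  have diag: "A $$ (i, i) = (if a = 0 then c * dot_sign n b i else 0)" if "i < 2^n" for i
    using that xor_eq_self_iff[of i a] by (auto simp: A pauli_XZ_index)
  consider (off_diagonal) "a \<noteq> 0" | (identity) "a = 0" "b = 0" | (diagonal) "a = 0" "b \<noteq> 0"
    by blast
  then show ?thesis
  proof cases
    case off_diagonal
    then have "(\<Sum>i<2^n. A $$ (i, i)) = 0" using diag by simp
    then show ?thesis ..
  next
    case identity
    then show ?thesis by (auto simp: A pauli_XZ_zero)
  next
    case diagonal
    then show ?thesis using diag sum_dot_sign[OF _ ab(2)] by (simp add: sum_distrib_left[symmetric])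
  qed
qed

section \<open>Characters of the group of bit strings\<close>

lemma zero_in_grp [simp]: "0 \<in> grp m"
  unfolding grp_def by simp

lemma finite_grp [simp]: "finite (grp m)"
  unfolding grp_def by simp

lemma card_grp: "card (grp m) = 2^m"
  unfolding grp_def by simp

lemma xor_in_grp [simp]: "a \<in> grp m \<Longrightarrow> b \<in> grp m \<Longrightarrow> xor a b \<in> grp m"
  unfolding grp_def using xor_less_exp by auto

lemma bij_betw_xor_grp: "g \<in> grp m \<Longrightarrow> bij_betw (xor g) (grp m) (grp m)"
  by (rule bij_betw_byWitness[where f'="xor g"]) auto

lemma dual_grp_square: "\<xi> \<in> dual_grp m \<Longrightarrow> \<xi> x * \<xi> x = 1"
  unfolding dual_grp_def by (cases "x \<in> grp m") auto

lemma cnj_dual_grp [simp]: "\<xi> \<in> dual_grp m \<Longrightarrow> cnj (\<xi> x) = \<xi> x"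
  unfolding dual_grp_def by (cases "x \<in> grp m") auto

lemma dual_grp_xor: "\<xi> \<in> dual_grp m \<Longrightarrow> a \<in> grp m \<Longrightarrow> b \<in> grp m \<Longrightarrow> \<xi> (xor a b) = \<xi> a * \<xi> b"
  unfolding dual_grp_def by auto

lemma dual_grp_zero: "\<xi> \<in> dual_grp m \<Longrightarrow> \<xi> 0 = 1"
  using dual_grp_xor[of \<xi> m 0 0] dual_grp_square[of \<xi> m 0] by simp

lemma triv_char_in_dual_grp: "triv_char \<in> dual_grp m"
  unfolding dual_grp_def triv_char_def by auto

lemma char_mult_in_dual_grp:
  assumes \<xi>: "\<xi> \<in> dual_grp m" and \<eta>: "\<eta> \<in> dual_grp m"
  shows "char_mult \<xi> \<eta> \<in> dual_grp m"
proof -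
  have "\<xi> g * \<eta> g = 1 \<or> \<xi> g * \<eta> g = -1" if "g \<in> grp m" for g
    using \<xi> \<eta> that unfolding dual_grp_def by force
  then show ?thesis
    using \<xi> \<eta> unfolding dual_grp_def char_mult_def by (auto simp: mult_ac)
qed

lemma char_mult_cancel: "\<xi> \<in> dual_grp m \<Longrightarrow> char_mult \<xi> (char_mult \<xi> \<eta>) = \<eta>"
  unfolding char_mult_def using dual_grp_square by (auto simp flip: mult.assoc)

lemma char_mult_self: "\<xi> \<in> dual_grp m \<Longrightarrow> char_mult \<xi> \<xi> = triv_char"
  unfolding char_mult_def triv_char_def using dual_grp_square by auto

lemma bij_betw_char_mult: "\<xi> \<in> dual_grp m \<Longrightarrow> bij_betw (char_mult \<xi>) (dual_grp m) (dual_grp m)"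
  by (rule bij_betw_byWitness[where f'="char_mult \<xi>"]) (auto simp: char_mult_cancel char_mult_in_dual_grp)

lemma sum_dual_grp_apply:
  assumes x: "x \<in> grp m"
  shows "(\<Sum>\<xi>\<in>dual_grp m. \<xi> x) = (if x = 0 then of_nat (card (dual_grp m)) else 0)"
proof (cases "x = 0")
  case True
  then show ?thesis by (simp add: dual_grp_zero)
next
  case False
  then obtain j where j: "bit x j" using nonzero_imp_ex_bit by blast
  define \<xi>\<^sub>j :: "nat \<Rightarrow> complex" where "\<xi>\<^sub>j = (\<lambda>y. if y \<in> grp m \<and> bit y j then -1 else 1)"
  have "\<xi>\<^sub>j \<in> dual_grp m"
    unfolding dual_grp_def \<xi>\<^sub>j_def by (auto simp: bit_xor_iff)
  then have "(\<Sum>\<xi>\<in>dual_grp m. \<xi> x) = (\<Sum>\<xi>\<in>dual_grp m. char_mult \<xi>\<^sub>j \<xi> x)"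
    using sum.reindex_bij_betw[OF bij_betw_char_mult, of \<xi>\<^sub>j m "\<lambda>\<xi>. \<xi> x"] by simp
  also have "\<dots> = - (\<Sum>\<xi>\<in>dual_grp m. \<xi> x)"
    using x j unfolding char_mult_def \<xi>\<^sub>j_def by (simp add: sum_negf)
  finally show ?thesis using False by simp
qed

lemma sum_grp_char:
  assumes \<xi>: "\<xi> \<in> dual_grp m"
  shows "(\<Sum>a\<in>grp m. \<xi> a) = (if \<xi> = triv_char then 2^m else 0)"
proof (cases "\<xi> = triv_char")
  case True
  then show ?thesis by (simp add: triv_char_def card_grp)
next
  case False
  then obtain g where "\<xi> g \<noteq> 1" unfolding triv_char_def by auto
  with \<xi> have g: "g \<in> grp m" "\<xi> g = -1" unfolding dual_grp_def by auto
  have "(\<Sum>a\<in>grp m. \<xi> a) = (\<Sum>a\<in>grp m. \<xi> (xor g a))"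
    using sum.reindex_bij_betw[OF bij_betw_xor_grp[OF g(1)], of \<xi>] by simp
  also have "\<dots> = - (\<Sum>a\<in>grp m. \<xi> a)" using g \<xi> by (simp add: dual_grp_xor sum_negf)
  finally show ?thesis using False by simp
qed

section \<open>The projector onto the code space\<close>

locale code_projector =
  fixes n m :: nat and U :: "nat \<Rightarrow> complex mat"
  assumes stab_rep: "pauli_stab_rep n m U"
begin

abbreviation "G \<equiv> grp m"
abbreviation "P \<equiv> proj_pn n m U"

text \<open>Side conditions of the carrier-guarded matrix laws fixed to \<open>2^n \<times> 2^n\<close>, so that the
  simplifier can discharge them.\<close>

lemmas mult_carrier_mat_2n [simp] = mult_carrier_mat[of _ "2^n" "2^n" _ "2^n"]
lemmas assoc_mult_mat_2n [simp] = assoc_mult_mat[of _ "2^n" "2^n" _ "2^n" _ "2^n"]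
lemmas mult_smult_distrib_2n [simp] = mult_smult_distrib[of _ "2^n" "2^n" _ "2^n"]
lemmas mult_smult_assoc_mat_2n [simp] = mult_smult_assoc_mat[of _ "2^n" "2^n" _ "2^n"]

lemma U_pauli: "g \<in> G \<Longrightarrow> U g \<in> pauli_group n"
  using stab_rep unfolding pauli_stab_rep_def by auto

lemma U_carrier [simp]: "g \<in> G \<Longrightarrow> U g \<in> carrier_mat (2^n) (2^n)"
  using U_pauli pauli_group_carrier by blast

lemma U_dim [simp]: "g \<in> G \<Longrightarrow> dim_row (U g) = 2^n" "g \<in> G \<Longrightarrow> dim_col (U g) = 2^n"
  using U_carrier carrier_matD by blast+

lemma U_xor: "g \<in> G \<Longrightarrow> h \<in> G \<Longrightarrow> U (xor g h) = U g * U h"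
  using stab_rep unfolding pauli_stab_rep_def by auto

lemma U_zero: "U 0 = 1\<^sub>m (2^n)"
proof (rule mat_eq_one_if_unitary_idem)
  show "U 0 * U 0 = U 0" using U_xor[of 0 0] by simp
qed (use pauli_group_adjoint(2)[OF U_pauli] in auto)

lemma U_square: "g \<in> G \<Longrightarrow> U g * U g = 1\<^sub>m (2^n)"
  using U_xor[of g g] U_zero by simp

lemma U_adjoint: "g \<in> G \<Longrightarrow> mat_adjoint (U g) = U g"
  by (intro mat_adjoint_eq_if_unitary_involution[OF U_carrier] pauli_group_adjoint(2)[OF U_pauli] U_square)

lemma trace_U:
  assumes g: "g \<in> G" "g \<noteq> 0"
  shows "(\<Sum>i<2^n. U g $$ (i, i)) = 0"
  using pauli_group_scalar_or_traceless[OF U_pauli[OF g(1)]]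
proof
  assume "\<exists>c. U g = c \<cdot>\<^sub>m 1\<^sub>m (2^n)"
  then obtain c where c: "U g = c \<cdot>\<^sub>m 1\<^sub>m (2^n)" ..
  then have "(c * c) \<cdot>\<^sub>m 1\<^sub>m (2^n) = (1\<^sub>m (2^n) :: complex mat)"
    using U_square[OF g(1)] by (simp add: smult_smult_mat)
  then have "((c * c) \<cdot>\<^sub>m 1\<^sub>m (2^n)) $$ (0, 0) = (1\<^sub>m (2^n) :: complex mat) $$ (0, 0)"
    by (rule arg_cong)
  then have "c\<^sup>2 = 1" by (simp add: power2_eq_square)
  then consider "c = 1" | "c = -1" by (auto simp: power2_eq_1_iff)
  then show ?thesis
  proof cases
    case 1
    then have "U g = U 0" using c U_zero by simp
    then have "g = 0" using stab_rep g(1) unfolding pauli_stab_rep_def inj_on_def by auto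
    then show ?thesis using g(2) by simp
  next
    case 2
    then have "U g = - 1\<^sub>m (2^n)" using c by auto
    then show ?thesis using stab_rep g(1) unfolding pauli_stab_rep_def by (metis image_eqI)
  qed
qed

lemma proj_pn_eq: "P = (1 / 2^m) \<cdot>\<^sub>m msum (2^n) U G"
  unfolding proj_pn_def card_grp by simp

lemma proj_pn_carrier [simp]: "P \<in> carrier_mat (2^n) (2^n)"
  unfolding proj_pn_eq by simp

lemma proj_pn_dim [simp]: "dim_row P = 2^n" "dim_col P = 2^n"
  using carrier_matD[OF proj_pn_carrier] by simp_all

lemma U_mult_msum_U: "g \<in> G \<Longrightarrow> U g * msum (2^n) U G = msum (2^n) U G"
proof -
  assume g: "g \<in> G"
  have "U g * msum (2^n) U G = msum (2^n) (\<lambda>h. U (xor g h)) G"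
    using g by (auto simp: mult_msum U_xor intro!: msum_cong)
  also have "\<dots> = msum (2^n) U G"
    using msum_reindex[OF bij_betw_xor_grp[OF g], of "2^n" U] by simp
  finally show ?thesis .
qed

lemma msum_U_mult_U: "g \<in> G \<Longrightarrow> msum (2^n) U G * U g = msum (2^n) U G"
proof -
  assume g: "g \<in> G"
  have "msum (2^n) U G * U g = msum (2^n) (\<lambda>h. U (xor g h)) G"
    using g by (auto simp: msum_mult U_xor xor.commute intro!: msum_cong)
  also have "\<dots> = msum (2^n) U G"
    using msum_reindex[OF bij_betw_xor_grp[OF g], of "2^n" U] by simp
  finally show ?thesis .
qed

lemma U_mult_proj_pn: "g \<in> G \<Longrightarrow> U g * P = P"
  unfolding proj_pn_eq by (simp add: U_mult_msum_U)

lemma proj_pn_mult_U: "g \<in> G \<Longrightarrow> P * U g = P"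
  unfolding proj_pn_eq by (simp add: msum_U_mult_U)

lemma proj_pn_idem: "P * P = P"
proof -
  have "msum (2^n) U G * P = msum (2^n) (\<lambda>g. P) G"
    by (auto simp: msum_mult U_mult_proj_pn intro!: msum_cong)
  also have "\<dots> = 2^m \<cdot>\<^sub>m P"
    by (simp add: msum_const card_grp)
  finally show ?thesis
    by (subst (1) proj_pn_eq) (simp add: smult_smult_mat)
qed

lemma proj_pn_adjoint: "mat_adjoint P = P"
  unfolding proj_pn_eq mat_adjoint_smult
  by (subst mat_adjoint_msum[of _ _ "2^n"]) (auto simp: U_adjoint intro!: msum_cong)

lemma trace_proj_pn: "(\<Sum>i<2^n. P $$ (i, i)) = 2^n / 2^m"
proof -
  have "(\<Sum>i<2^n. P $$ (i, i)) = (1 / 2^m) * (\<Sum>g\<in>G. \<Sum>i<2^n. U g $$ (i, i))"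
    unfolding proj_pn_eq by (simp add: sum_distrib_left sum.swap[of _ G])
  also have "(\<Sum>g\<in>G. \<Sum>i<2^n. U g $$ (i, i)) = (\<Sum>g\<in>G. if g = 0 then 2^n else 0)"
    by (intro sum.cong) (auto simp: trace_U U_zero)
  also have "\<dots> = 2^n" by simp
  finally show ?thesis by simp
qed

lemma smult_proj_pn_cancel:
  assumes "x \<cdot>\<^sub>m P = y \<cdot>\<^sub>m P"
  shows "x = y"
proof -
  have "x * P $$ (i, i) = y * P $$ (i, i)" if "i < 2^n" for i
    using arg_cong[OF assms, of "\<lambda>A. A $$ (i, i)"] that by simp
  then have "x * (\<Sum>i<2^n. P $$ (i, i)) = y * (\<Sum>i<2^n. P $$ (i, i))"
    unfolding sum_distrib_left by (intro sum.cong) auto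
  then show ?thesis by (simp add: trace_proj_pn)
qed

lemma pauli_sandwich_proj_pn:
  assumes Q: "Q \<in> pauli_group n"
  shows "P * Q * P = 0\<^sub>m (2^n) (2^n) \<or> Q * P = P * Q * P"
proof (cases "\<exists>g\<in>G. U g * Q = (-1) \<cdot>\<^sub>m (Q * U g)")
  case True
  then obtain g where g: "g \<in> G" "U g * Q = (-1) \<cdot>\<^sub>m (Q * U g)" by blast
  have Qc: "Q \<in> carrier_mat (2^n) (2^n)" using Q pauli_group_carrier by blast
  have "P * Q * P = P * (U g * Q) * P" using proj_pn_mult_U[OF g(1)] g(1) Qc
    by (metis U_carrier assoc_mult_mat_2n proj_pn_carrier)
  also have "\<dots> = (-1) \<cdot>\<^sub>m (P * Q * (U g * P))" unfolding g(2) using g(1) Qc by simp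
  also have "\<dots> = (-1) \<cdot>\<^sub>m (P * Q * P)" using U_mult_proj_pn[OF g(1)] by simp
  finally have "P * Q * P = 0\<^sub>m (dim_row (P * Q * P)) (dim_col (P * Q * P))"
    by (rule mat_eq_zero_if_eq_neg)
  then show ?thesis by simp
next
  case False
  have Qc: "Q \<in> carrier_mat (2^n) (2^n)" using Q pauli_group_carrier by blast
  have "U g * Q = Q * U g" if g: "g \<in> G" for g
    using pauli_group_commute_or_anticommute[OF U_pauli[OF g] Q] False g by force
  then have "Q * msum (2^n) U G = msum (2^n) U G * Q"
    using Qc by (auto simp: mult_msum msum_mult intro!: msum_cong)
  then have "Q * P = P * Q"
    unfolding proj_pn_eq using Qc by simp
  then have "P * Q * P = Q * (P * P)" using Qc by (metis assoc_mult_mat_2n proj_pn_carrier)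
  then show ?thesis by (simp add: proj_pn_idem)
qed

lemma pauli_sandwich_proj_pn_swap:
  assumes A: "A \<in> pauli_group n" and B: "B \<in> pauli_group n"
    and AB: "P * A * B * P = 0\<^sub>m (2^n) (2^n)"
  shows "P * B * A * P = 0\<^sub>m (2^n) (2^n)"
proof -
  obtain \<sigma> where BA: "B * A = \<sigma> \<cdot>\<^sub>m (A * B)"
    using pauli_group_commute_or_anticommute[OF B A] by blast
  have carrier: "A \<in> carrier_mat (2^n) (2^n)" "B \<in> carrier_mat (2^n) (2^n)"
    using A B pauli_group_carrier by blast+
  have "P * B * A * P = P * (B * A) * P" using carrier by simp
  also have "\<dots> = \<sigma> \<cdot>\<^sub>m (P * A * B * P)" unfolding BA using carrier by simp
  finally show ?thesis using AB by simp
qed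

lemma nondegenerate_correctable_orthogonal:
  assumes E: "\<And>\<xi>. \<xi> \<in> I \<Longrightarrow> E \<xi> \<in> pauli_group n"
    and corr: "correctable_with P E I e C" and C_inv: "invertible_mat C"
    and \<xi>: "\<xi> \<in> I" and \<eta>: "\<eta> \<in> I" and ne: "\<xi> \<noteq> \<eta>"
  shows "P * mat_adjoint (E \<xi>) * E \<eta> * P = 0\<^sub>m (2^n) (2^n)"
proof -
  have E_carrier: "E \<zeta> \<in> carrier_mat (2^n) (2^n)" if "\<zeta> \<in> I" for \<zeta>
    using E that pauli_group_carrier by blast
  define Q where "Q = mat_adjoint (E \<xi>) * E \<eta>"
  have PQP: "P * mat_adjoint (E \<xi>) * E \<eta> * P = P * Q * P"
    unfolding Q_def using E_carrier \<xi> \<eta> by simp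
  have Q: "Q \<in> pauli_group n"
    unfolding Q_def using E \<xi> \<eta> by (intro pauli_group_mult pauli_group_adjoint(1))
  then consider "P * Q * P = 0\<^sub>m (2^n) (2^n)" | "Q * P = P * Q * P"
    using pauli_sandwich_proj_pn by blast
  then show ?thesis
  proof cases
    case 1
    then show ?thesis using PQP by simp
  next
    case 2
    \<comment> \<open>\<open>Q\<close> commutes with the stabilisers, so \<open>E \<eta> P\<close> is a multiple of \<open>E \<xi> P\<close>,
      which makes two columns of \<open>C\<close> proportional.\<close>
    obtain bij: "bij_betw e {..<card I} I" and C: "C \<in> carrier_mat (card I) (card I)"
      and coeff: "\<And>p q. p < card I \<Longrightarrow> q < card I \<Longrightarrow>
        P * mat_adjoint (E (e p)) * E (e q) * P = C $$ (p, q) \<cdot>\<^sub>m P"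
      using corr unfolding correctable_with_def by blast
    obtain p q where p: "p < card I" "e p = \<xi>" and q: "q < card I" "e q = \<eta>"
      using bij \<xi> \<eta> unfolding bij_betw_def by (metis imageE lessThan_iff)
    define \<gamma> where "\<gamma> = C $$ (p, q)"
    have QP: "Q * P = \<gamma> \<cdot>\<^sub>m P"
      unfolding 2 PQP[symmetric] \<gamma>_def using coeff[OF p(1) q(1)] p q by simp
    have "E \<xi> * Q = (E \<xi> * mat_adjoint (E \<xi>)) * E \<eta>"
      unfolding Q_def using E_carrier \<xi> \<eta> by (intro assoc_mult_mat_2n[symmetric]) auto
    also have "\<dots> = E \<eta>"
      using E_carrier[OF \<eta>] by (simp add: pauli_group_adjoint(3)[OF E[OF \<xi>]])
    finally have "E \<eta> = E \<xi> * Q" ..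
    then have "E \<eta> * P = E \<xi> * (Q * P)"
      using E_carrier[OF \<xi>] pauli_group_carrier[OF Q] by simp
    then have E\<eta>: "E \<eta> * P = \<gamma> \<cdot>\<^sub>m (E \<xi> * P)"
      using E_carrier[OF \<xi>] by (simp add: QP)
    have "C $$ (l, q) = \<gamma> * C $$ (l, p)" if l: "l < card I" for l
    proof (rule smult_proj_pn_cancel)
      have el: "e l \<in> I" using bij l unfolding bij_betw_def by auto
      have "C $$ (l, q) \<cdot>\<^sub>m P = P * mat_adjoint (E (e l)) * (E \<eta> * P)"
        using coeff[OF l q(1)] q el \<eta> E_carrier by simp
      also have "\<dots> = \<gamma> \<cdot>\<^sub>m (P * mat_adjoint (E (e l)) * E \<xi> * P)"
        unfolding E\<eta> using el \<xi> E_carrier by simp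
      also have "\<dots> = (\<gamma> * C $$ (l, p)) \<cdot>\<^sub>m P"
        using coeff[OF l p(1)] p by (simp add: smult_smult_mat)
      finally show "C $$ (l, q) \<cdot>\<^sub>m P = (\<gamma> * C $$ (l, p)) \<cdot>\<^sub>m P" .
    qed
    moreover have "p \<noteq> q" using p q ne by auto
    ultimately show ?thesis using invertible_mat_col_not_multiple[OF C C_inv p(1) q(1)] by blast
  qed
qed

end

section \<open>The dual projectors\<close>

locale dual_projectors = code_projector +
  fixes Uh :: "(nat \<Rightarrow> complex) \<Rightarrow> complex mat"
  assumes dual: "dual_rep n m U Uh"
    and card_dual_grp: "card (dual_grp m) = 2^m"
    \<comment> \<open>true for every \<open>m\<close>; in the theorem it is read off the bijections \<open>h(\<cdot>, g)\<close>\<close>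
begin

abbreviation "D \<equiv> dual_grp m"
abbreviation "Ph \<equiv> hatP n m Uh"

lemma finite_dual_grp [simp]: "finite D"
  using card_dual_grp by (metis card.infinite power_not_zero zero_neq_numeral)

lemma Uh_carrier [simp]: "\<xi> \<in> D \<Longrightarrow> Uh \<xi> \<in> carrier_mat (2^n) (2^n)"
  using dual unfolding dual_rep_def unitary_mat_def by blast

lemma Uh_unitary: "\<xi> \<in> D \<Longrightarrow> mat_adjoint (Uh \<xi>) * Uh \<xi> = 1\<^sub>m (2^n)"
  using dual unfolding dual_rep_def unitary_mat_def by blast

lemma Uh_char_mult: "\<xi> \<in> D \<Longrightarrow> \<eta> \<in> D \<Longrightarrow> Uh (char_mult \<xi> \<eta>) = Uh \<xi> * Uh \<eta>"
  using dual unfolding dual_rep_def by blast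

lemma U_mult_Uh: "g \<in> G \<Longrightarrow> \<xi> \<in> D \<Longrightarrow> U g * Uh \<xi> = \<xi> g \<cdot>\<^sub>m (Uh \<xi> * U g)"
  using dual unfolding dual_rep_def by blast

lemma Uh_triv: "Uh triv_char = 1\<^sub>m (2^n)"
proof (rule mat_eq_one_if_unitary_idem)
  show "Uh triv_char * Uh triv_char = Uh triv_char"
    using Uh_char_mult[OF triv_char_in_dual_grp triv_char_in_dual_grp]
      char_mult_self[OF triv_char_in_dual_grp] by simp
qed (use Uh_unitary triv_char_in_dual_grp in auto)

lemma Uh_adjoint: "\<xi> \<in> D \<Longrightarrow> mat_adjoint (Uh \<xi>) = Uh \<xi>"
  using Uh_char_mult[of \<xi> \<xi>] char_mult_self[of \<xi>] Uh_triv
  by (intro mat_adjoint_eq_if_unitary_involution[OF Uh_carrier] Uh_unitary) simp_all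

lemma hatP_carrier [simp]: "Ph a \<in> carrier_mat (2^n) (2^n)"
  unfolding hatP_def by simp

lemma hatP_dim [simp]: "dim_row (Ph a) = 2^n" "dim_col (Ph a) = 2^n"
  using hatP_carrier carrier_matD by blast+

lemma hatP_adjoint: "mat_adjoint (Ph a) = Ph a"
  unfolding hatP_def mat_adjoint_smult
  by (subst mat_adjoint_msum[of _ _ "2^n"]) (auto simp: mat_adjoint_smult Uh_adjoint intro!: msum_cong)

lemma U_mult_hatP:
  assumes g: "g \<in> G" and b: "b \<in> G"
  shows "U g * Ph b = Ph (xor b g) * U g"
proof -
  have "U g * (\<xi> b \<cdot>\<^sub>m Uh \<xi>) = (\<xi> (xor b g) \<cdot>\<^sub>m Uh \<xi>) * U g" if \<xi>: "\<xi> \<in> D" for \<xi>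
    using g b \<xi> by (simp add: U_mult_Uh dual_grp_xor smult_smult_mat)
  then have "U g * msum (2^n) (\<lambda>\<xi>. \<xi> b \<cdot>\<^sub>m Uh \<xi>) D = msum (2^n) (\<lambda>\<xi>. \<xi> (xor b g) \<cdot>\<^sub>m Uh \<xi>) D * U g"
    using g by (simp add: mult_msum msum_mult cong: msum_cong)
  then show ?thesis unfolding hatP_def using g by simp
qed

lemma char_msum_Uh_mult:
  assumes a: "a \<in> G" and b: "b \<in> G"
  shows "msum (2^n) (\<lambda>\<xi>. \<xi> a \<cdot>\<^sub>m Uh \<xi>) D * msum (2^n) (\<lambda>\<xi>. \<xi> b \<cdot>\<^sub>m Uh \<xi>) D
       = (if a = b then 2^m else 0) \<cdot>\<^sub>m msum (2^n) (\<lambda>\<zeta>. \<zeta> b \<cdot>\<^sub>m Uh \<zeta>) D"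
proof -
  have row: "(\<xi> a \<cdot>\<^sub>m Uh \<xi>) * msum (2^n) (\<lambda>\<eta>. \<eta> b \<cdot>\<^sub>m Uh \<eta>) D
      = msum (2^n) (\<lambda>\<zeta>. (\<xi> (xor a b) * \<zeta> b) \<cdot>\<^sub>m Uh \<zeta>) D" if \<xi>: "\<xi> \<in> D" for \<xi>
  proof -
    have "(\<xi> a \<cdot>\<^sub>m Uh \<xi>) * msum (2^n) (\<lambda>\<eta>. \<eta> b \<cdot>\<^sub>m Uh \<eta>) D
        = msum (2^n) (\<lambda>\<eta>. (\<xi> a \<cdot>\<^sub>m Uh \<xi>) * (\<eta> b \<cdot>\<^sub>m Uh \<eta>)) D"
      using \<xi> by (intro mult_msum) auto
    also have "\<dots> = msum (2^n) (\<lambda>\<zeta>. (\<xi> a \<cdot>\<^sub>m Uh \<xi>) * (char_mult \<xi> \<zeta> b \<cdot>\<^sub>m Uh (char_mult \<xi> \<zeta>))) D"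
      by (rule msum_reindex[OF bij_betw_char_mult[OF \<xi>]])
    also have "\<dots> = msum (2^n) (\<lambda>\<zeta>. (\<xi> (xor a b) * \<zeta> b) \<cdot>\<^sub>m Uh \<zeta>) D"
    proof (rule msum_cong)
      fix \<zeta> assume \<zeta>: "\<zeta> \<in> D"
      have "Uh \<xi> * Uh (char_mult \<xi> \<zeta>) = Uh \<zeta>"
        using Uh_char_mult[OF \<xi> char_mult_in_dual_grp[OF \<xi> \<zeta>]] char_mult_cancel[OF \<xi>] by simp
      moreover have "\<xi> a * char_mult \<xi> \<zeta> b = \<xi> (xor a b) * \<zeta> b"
        using \<xi> a b by (simp add: char_mult_def dual_grp_xor mult.assoc)
      ultimately show "(\<xi> a \<cdot>\<^sub>m Uh \<xi>) * (char_mult \<xi> \<zeta> b \<cdot>\<^sub>m Uh (char_mult \<xi> \<zeta>))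
          = (\<xi> (xor a b) * \<zeta> b) \<cdot>\<^sub>m Uh \<zeta>"
        unfolding smult_mult_smult_mat[OF Uh_carrier[OF \<xi>] Uh_carrier[OF char_mult_in_dual_grp[OF \<xi> \<zeta>]]]
        by simp
    qed
    finally show ?thesis .
  qed
  have "msum (2^n) (\<lambda>\<xi>. \<xi> a \<cdot>\<^sub>m Uh \<xi>) D * msum (2^n) (\<lambda>\<xi>. \<xi> b \<cdot>\<^sub>m Uh \<xi>) D
      = msum (2^n) (\<lambda>\<xi>. msum (2^n) (\<lambda>\<zeta>. (\<xi> (xor a b) * \<zeta> b) \<cdot>\<^sub>m Uh \<zeta>) D) D"
    using row by (subst msum_mult) (auto intro!: msum_cong)
  also have "\<dots> = msum (2^n) (\<lambda>\<zeta>. (\<Sum>\<xi>\<in>D. \<xi> (xor a b) * \<zeta> b) \<cdot>\<^sub>m Uh \<zeta>) D"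
    by (subst msum_swap) (auto simp: msum_smult_const intro!: msum_cong)
  also have "\<dots> = msum (2^n) (\<lambda>\<zeta>. (if a = b then 2^m else 0) \<cdot>\<^sub>m (\<zeta> b \<cdot>\<^sub>m Uh \<zeta>)) D"
    using a b
    by (auto simp: sum_distrib_right[symmetric] sum_dual_grp_apply card_dual_grp smult_smult_mat
        xor_eq_zero_iff
        intro!: msum_cong)
  also have "\<dots> = (if a = b then 2^m else 0) \<cdot>\<^sub>m msum (2^n) (\<lambda>\<zeta>. \<zeta> b \<cdot>\<^sub>m Uh \<zeta>) D"
    by (rule smult_msum[symmetric]) auto
  finally show ?thesis .
qed

lemma hatP_mult:
  assumes a: "a \<in> G" and b: "b \<in> G"
  shows "Ph a * Ph b = (if a = b then Ph a else 0\<^sub>m (2^n) (2^n))"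
proof -
  have "Ph a * Ph b = (1 / 2^m * (1 / 2^m) * (if a = b then 2^m else 0))
      \<cdot>\<^sub>m msum (2^n) (\<lambda>\<zeta>. \<zeta> b \<cdot>\<^sub>m Uh \<zeta>) D"
    unfolding hatP_def smult_mult_smult_mat[OF msum_carrier msum_carrier] char_msum_Uh_mult[OF a b]
    by (simp add: smult_smult_mat)
  then show ?thesis
    unfolding hatP_def by (auto simp: smult_smult_mat zero_smult_mat[OF msum_carrier])
qed

lemma msum_hatP: "msum (2^n) Ph G = 1\<^sub>m (2^n)"
proof -
  have "msum (2^n) Ph G = (1 / 2^m) \<cdot>\<^sub>m msum (2^n) (\<lambda>a. msum (2^n) (\<lambda>\<xi>. \<xi> a \<cdot>\<^sub>m Uh \<xi>) D) G"
    unfolding hatP_def by (subst smult_msum[of _ _ "2^n"]) auto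
  also have "msum (2^n) (\<lambda>a. msum (2^n) (\<lambda>\<xi>. \<xi> a \<cdot>\<^sub>m Uh \<xi>) D) G
      = msum (2^n) (\<lambda>\<xi>. msum (2^n) (\<lambda>a. \<xi> a \<cdot>\<^sub>m Uh \<xi>) G) D"
    by (rule msum_swap)
  also have "\<dots>
      = msum (2^n) (\<lambda>\<xi>. (if \<xi> = triv_char then 2^m else 0) \<cdot>\<^sub>m Uh \<xi>) D"
    by (intro msum_cong) (simp add: msum_smult_const sum_grp_char)
  also have "\<dots> = (if triv_char = triv_char then 2^m else 0) \<cdot>\<^sub>m Uh triv_char"
    using triv_char_in_dual_grp by (intro msum_single) (auto simp: zero_smult_mat)
  finally show ?thesis by (simp add: Uh_triv smult_smult_mat)
qed

lemma hatP_proj_pn_hatP: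
  assumes a: "a \<in> G"
  shows "Ph a * P * Ph a = (1 / 2^m) \<cdot>\<^sub>m Ph a"
proof -
  \<comment> \<open>Conjugation by \<open>U g\<close> shifts \<open>Ph a\<close> to \<open>Ph (a xor g)\<close>, which is orthogonal to \<open>Ph a\<close>
    unless \<open>g = 0\<close>.\<close>
  have shift: "Ph a * (U g * Ph a) = (if g = 0 then Ph a else 0\<^sub>m (2^n) (2^n))" if g: "g \<in> G" for g
  proof -
    have "Ph a * (U g * Ph a) = U g * (Ph (xor a g) * Ph a)"
      using U_mult_hatP[OF g xor_in_grp[OF a g]] g by (simp flip: assoc_mult_mat_2n)
    also have "\<dots> = (if g = 0 then Ph a else 0\<^sub>m (2^n) (2^n))"
      using a g xor_eq_self_iff[of a g] by (simp add: hatP_mult U_zero)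
    finally show ?thesis .
  qed
  have "Ph a * msum (2^n) (\<lambda>g. U g * Ph a) G = msum (2^n) (\<lambda>g. Ph a * (U g * Ph a)) G"
    by (intro mult_msum) auto
  also have "\<dots> = Ph a * (U 0 * Ph a)"
    using shift by (intro msum_single) auto
  also have "\<dots> = Ph a"
    using shift by simp
  finally have "Ph a * msum (2^n) (\<lambda>g. U g * Ph a) G = Ph a" .
  moreover have "P * Ph a = (1 / 2^m) \<cdot>\<^sub>m msum (2^n) (\<lambda>g. U g * Ph a) G"
    unfolding proj_pn_eq by (simp add: msum_mult)
  ultimately show ?thesis by simp
qed

definition recovery_op :: "((nat \<Rightarrow> complex) \<Rightarrow> complex mat) \<Rightarrow> ((nat \<Rightarrow> complex) \<Rightarrow> nat) \<Rightarrow> complex mat"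
  where "recovery_op E f = complex_of_real (sqrt (2^m)) \<cdot>\<^sub>m msum (2^n) (\<lambda>\<xi>. Ph (f \<xi>) * P * E \<xi>) D"

context
  fixes E :: "(nat \<Rightarrow> complex) \<Rightarrow> complex mat"
  assumes E_pauli: "\<And>\<xi>. \<xi> \<in> D \<Longrightarrow> E \<xi> \<in> pauli_group n"
    and E_orth: "\<And>\<xi> \<eta>. \<xi> \<in> D \<Longrightarrow> \<eta> \<in> D \<Longrightarrow> \<xi> \<noteq> \<eta> \<Longrightarrow>
      P * mat_adjoint (E \<xi>) * E \<eta> * P = 0\<^sub>m (2^n) (2^n)"
begin

lemma E_carrier [simp]: "\<xi> \<in> D \<Longrightarrow> E \<xi> \<in> carrier_mat (2^n) (2^n)"
  using E_pauli pauli_group_carrier by blast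

lemma proj_pn_E_mult_adjoint_proj_pn:
  assumes "\<xi> \<in> D" "\<eta> \<in> D"
  shows "P * E \<xi> * mat_adjoint (E \<eta>) * P = (if \<xi> = \<eta> then P else 0\<^sub>m (2^n) (2^n))"
proof (cases "\<xi> = \<eta>")
  case True
  then show ?thesis using assms pauli_group_adjoint(3)[OF E_pauli] by (simp add: proj_pn_idem)
next
  case False
  then show ?thesis
    using assms pauli_sandwich_proj_pn_swap[OF pauli_group_adjoint(1) E_pauli E_orth] E_pauli by simp
qed

lemma recovery_op_term_mult_adjoint:
  assumes "\<xi> \<in> D" "\<eta> \<in> D" "f \<xi> \<in> G"
  shows "(Ph (f \<xi>) * P * E \<xi>) * mat_adjoint (Ph (f \<eta>) * P * E \<eta>)
    = (if \<xi> = \<eta> then (1 / 2^m) \<cdot>\<^sub>m Ph (f \<xi>) else 0\<^sub>m (2^n) (2^n))"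
proof -
  have "mat_adjoint (Ph (f \<eta>) * P * E \<eta>) = mat_adjoint (E \<eta>) * P * Ph (f \<eta>)"
    using assms by (simp add: mat_adjoint_mult[of _ "2^n" "2^n" _ "2^n"] proj_pn_adjoint hatP_adjoint)
  then have "(Ph (f \<xi>) * P * E \<xi>) * mat_adjoint (Ph (f \<eta>) * P * E \<eta>)
      = Ph (f \<xi>) * (P * E \<xi> * mat_adjoint (E \<eta>) * P) * Ph (f \<eta>)"
    using assms by simp
  also have "\<dots> = (if \<xi> = \<eta> then Ph (f \<xi>) * P * Ph (f \<xi>) else 0\<^sub>m (2^n) (2^n))"
    unfolding proj_pn_E_mult_adjoint_proj_pn[OF assms(1,2)] by auto
  finally show ?thesis
    unfolding hatP_proj_pn_hatP[OF assms(3)] .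
qed

lemma recovery_op_mult_adjoint:
  assumes f: "bij_betw f D G"
  shows "recovery_op E f * mat_adjoint (recovery_op E f) = 1\<^sub>m (2^n)"
proof -
  define T where "T = (\<lambda>\<xi>. Ph (f \<xi>) * P * E \<xi>)"
  have fG: "f \<xi> \<in> G" if "\<xi> \<in> D" for \<xi> using f that unfolding bij_betw_def by auto
  have T: "T \<xi> \<in> carrier_mat (2^n) (2^n)" if "\<xi> \<in> D" for \<xi>
    unfolding T_def using that by simp
  have T_mult_adjoint: "T \<xi> * mat_adjoint (T \<eta>)
      = (if \<xi> = \<eta> then (1 / 2^m) \<cdot>\<^sub>m Ph (f \<xi>) else 0\<^sub>m (2^n) (2^n))"
    if "\<xi> \<in> D" "\<eta> \<in> D" for \<xi> \<eta>
    unfolding T_def using that fG by (intro recovery_op_term_mult_adjoint)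
  have "msum (2^n) T D * mat_adjoint (msum (2^n) T D)
      = msum (2^n) (\<lambda>\<xi>. T \<xi> * msum (2^n) (\<lambda>\<eta>. mat_adjoint (T \<eta>)) D) D"
    using T by (simp add: mat_adjoint_msum msum_mult)
  also have "\<dots> = msum (2^n) (\<lambda>\<xi>. msum (2^n) (\<lambda>\<eta>. T \<xi> * mat_adjoint (T \<eta>)) D) D"
    using T by (intro msum_cong mult_msum) auto
  also have "\<dots> = msum (2^n) (\<lambda>\<xi>. (1 / 2^m) \<cdot>\<^sub>m Ph (f \<xi>)) D"
  proof (rule msum_cong)
    fix \<xi> assume \<xi>: "\<xi> \<in> D"
    have "msum (2^n) (\<lambda>\<eta>. T \<xi> * mat_adjoint (T \<eta>)) D = T \<xi> * mat_adjoint (T \<xi>)"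
      using \<xi> T by (intro msum_single) (auto simp: T_mult_adjoint)
    then show "msum (2^n) (\<lambda>\<eta>. T \<xi> * mat_adjoint (T \<eta>)) D = (1 / 2^m) \<cdot>\<^sub>m Ph (f \<xi>)"
      using \<xi> by (simp add: T_mult_adjoint)
  qed
  also have "\<dots> = (1 / 2^m) \<cdot>\<^sub>m msum (2^n) Ph G"
    by (simp add: smult_msum msum_reindex[OF f])
  finally show ?thesis
    unfolding recovery_op_def T_def[symmetric]
    by (simp add: mat_adjoint_smult smult_mult_smult_mat[of _ "2^n" "2^n"] msum_hatP smult_smult_mat
        flip: of_real_mult)
qed

lemma recovery_op_unitary:
  assumes f: "bij_betw f D G"
  shows "unitary_mat (2^n) (recovery_op E f)"
proof -
  have carrier: "recovery_op E f \<in> carrier_mat (2^n) (2^n)"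
    unfolding recovery_op_def by simp
  show ?thesis
    unfolding unitary_mat_def using carrier recovery_op_mult_adjoint[OF f]
      mat_mult_left_right_inverse[OF carrier mat_adjoint_carrier[OF carrier] recovery_op_mult_adjoint[OF f]]
    by blast
qed

lemma recovery_op_mult_proj_pn:
  assumes E_triv: "E triv_char = 1\<^sub>m (2^n)" and f_triv: "f triv_char = g"
  shows "recovery_op E f * P = complex_of_real (sqrt (2^m)) \<cdot>\<^sub>m (Ph g * P)"
proof -
  have "P * E \<xi> * P = 0\<^sub>m (2^n) (2^n)" if "\<xi> \<in> D" "\<xi> \<noteq> triv_char" for \<xi>
    using E_orth[OF triv_char_in_dual_grp that(1)] that E_triv by simp
  then have "msum (2^n) (\<lambda>\<xi>. Ph (f \<xi>) * P * E \<xi> * P) D = Ph (f triv_char) * P * E triv_char * P"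
    using triv_char_in_dual_grp by (intro msum_single) auto
  then show ?thesis
    unfolding recovery_op_def using E_triv f_triv by (simp add: msum_mult proj_pn_idem)
qed

end

end

theorem mainTheorem16:
  fixes n k :: nat
    and U :: "nat \<Rightarrow> complex mat"
    and Uh :: "(nat \<Rightarrow> complex) \<Rightarrow> complex mat"
    and E :: "(nat \<Rightarrow> complex) \<Rightarrow> complex mat"
    and h :: "(nat \<Rightarrow> complex) \<Rightarrow> nat \<Rightarrow> nat"
  assumes "1 \<le> n" and "k < n"
    and "pauli_stab_rep n (n - k) U"
    and "dual_rep n (n - k) U Uh"
    and E_pauli: "\<forall>\<xi>\<in>dual_grp (n - k). E \<xi> \<in> pauli_group n"
    and corr: "\<exists>e C. correctable_with (proj_pn n (n - k) U) E (dual_grp (n - k)) e C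
               \<and> vec_space.rank (card (dual_grp (n - k))) C = 2^(n - k)
               \<and> invertible_mat C"
    and "E triv_char = 1\<^sub>m (2^n)"
    and "\<forall>\<xi>\<in>dual_grp (n - k). \<xi> \<noteq> triv_char \<longrightarrow>
           (\<forall>\<psi>\<in>H_pn n (n - k) U. \<forall>\<phi>\<in>H_pn n (n - k) U. (E \<xi> *\<^sub>v \<psi>) \<bullet>c \<phi> = 0)"
    and "\<forall>g\<in>grp (n - k). bij_betw (\<lambda>\<xi>. h \<xi> g) (dual_grp (n - k)) (grp (n - k))
                          \<and> h triv_char g = g"
  shows "\<forall>g\<in>grp (n - k).
           (let Eh = complex_of_real (sqrt (2^(n - k))) \<cdot>\<^sub>m
                     msum (2^n) (\<lambda>\<xi>. hatP n (n - k) Uh (h \<xi> g) * proj_pn n (n - k) U * E \<xi>)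
                                (dual_grp (n - k))
            in unitary_mat (2^n) Eh
               \<and> Eh * proj_pn n (n - k) U
                   = complex_of_real (sqrt (2^(n - k))) \<cdot>\<^sub>m (hatP n (n - k) Uh g * proj_pn n (n - k) U))"
proof -
  have h: "bij_betw (\<lambda>\<xi>. h \<xi> g) (dual_grp (n - k)) (grp (n - k))" "h triv_char g = g"
    if "g \<in> grp (n - k)" for g
    using assms(9) that by auto
  have "card (dual_grp (n - k)) = 2^(n - k)"
    using bij_betw_same_card[OF h(1)[OF zero_in_grp]] by (simp add: card_grp)
  then interpret dual_projectors n "n - k" U Uh
    using assms(3,4) by unfold_locales
  have E: "\<And>\<xi>. \<xi> \<in> D \<Longrightarrow> E \<xi> \<in> pauli_group n"
    using E_pauli by blast
  obtain e C where corr_C: "correctable_with P E D e C" and C_inv: "invertible_mat C"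
    using corr by blast
  have orth: "P * mat_adjoint (E \<xi>) * E \<eta> * P = 0\<^sub>m (2^n) (2^n)"
    if "\<xi> \<in> D" "\<eta> \<in> D" "\<xi> \<noteq> \<eta>" for \<xi> \<eta>
    by (rule nondegenerate_correctable_orthogonal[OF E corr_C C_inv that])
  have "unitary_mat (2^n) (recovery_op E (\<lambda>\<xi>. h \<xi> g))
      \<and> recovery_op E (\<lambda>\<xi>. h \<xi> g) * P = complex_of_real (sqrt (2^(n - k))) \<cdot>\<^sub>m (Ph g * P)"
    if "g \<in> G" for g
    using recovery_op_unitary[of E "\<lambda>\<xi>. h \<xi> g", OF E orth h(1)[OF that]]
      recovery_op_mult_proj_pn[of E "\<lambda>\<xi>. h \<xi> g", OF E orth assms(7) h(2)[OF that]] ..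
  then show ?thesis
    unfolding recovery_op_def Let_def by blast
qed

end
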